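(* Let $S\neq\mathcal{C}$ be a $\mathcal{C}$-semigroup. Then $S$ is $\mathcal{C}$-irreducible if and only if $\#\max_{\le_S}\mathrm{FG}(S)=1$.
   Context: An integer cone $\mathcal{C}\subseteq\mathbb{N}^p$ is the set of integer points of a finitely generated rational cone in $\mathbb{Q}_{\ge0}^p$. A $\mathcal{C}$-semigroup is a subset $S\subseteq\mathcal{C}$ containing $0$, closed under addition, with $\mathcal{C}\setminus S$ finite; $\mathcal{H}(S)=\mathcal{C}\setminus S$. A monomial order $\preceq$ on $\mathbb{N}^p$ is fixed (total order, compatible with addition, $\mathbf 0\preceq\mathbf c$ for all $\mathbf c$); $F(S)=\max_\preceq\mathcal{H}(S)$. $\mathrm{PF}(S)=\{\mathbf x\in\mathcal{H}(S)\mid\mathbf x+(S\setminus\{0\})\subseteq S\}$; $S$ is $\mathcal{C}$-irreducible if $\mathrm{PF}(S)=\{F(S)\}$ or $\mathrm{PF}(S)=\{F(S),F(S)/2\}$. $\mathbf x\le_S\mathbf y$ means $\mathbf y-\mathbf x\in S$; $\mathrm{FG}(S)=\{\mathbf x\in\mathcal{H}(S)\mid 2\mathbf x\in S,\ 3\mathbf x\in S\}$, and $\max_{\le_S}$ denotes the set of maximal elements with respect to $\le_S$. *)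

theory Defs
  imports Complex_Main "HOL-Library.Function_Algebras"
begin

text \<open>Elements of N^p are functions 'n \<Rightarrow> nat with 'n a finite index type (p = CARD('n)),
  with pointwise addition and zero.\<close>

definition integer_cone :: "('n::finite \<Rightarrow> nat) set \<Rightarrow> bool" where
  "integer_cone C \<longleftrightarrow>
     (\<exists>G :: ('n \<Rightarrow> rat) set. finite G \<and> (\<forall>g\<in>G. \<forall>i. g i \<ge> 0) \<and>
        C = {x. \<exists>l :: ('n \<Rightarrow> rat) \<Rightarrow> rat. (\<forall>g\<in>G. l g \<ge> 0) \<and>
                  (\<forall>i. of_nat (x i) = (\<Sum>g\<in>G. l g * g i))})"

definition monomial_order :: "(('n \<Rightarrow> nat) \<Rightarrow> ('n \<Rightarrow> nat) \<Rightarrow> bool) \<Rightarrow> bool" where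
  "monomial_order ord \<longleftrightarrow>
     (\<forall>a. ord a a) \<and> (\<forall>a b. ord a b \<and> ord b a \<longrightarrow> a = b) \<and>
     (\<forall>a b c. ord a b \<and> ord b c \<longrightarrow> ord a c) \<and> (\<forall>a b. ord a b \<or> ord b a) \<and>
     (\<forall>a b c. ord a b \<longrightarrow> ord (a + c) (b + c)) \<and> (\<forall>c. ord 0 c)"

definition C_semigroup :: "('n \<Rightarrow> nat) set \<Rightarrow> ('n \<Rightarrow> nat) set \<Rightarrow> bool" where
  "C_semigroup C S \<longleftrightarrow> S \<subseteq> C \<and> 0 \<in> S \<and> (\<forall>x\<in>S. \<forall>y\<in>S. x + y \<in> S) \<and> finite (C - S)"

definition gaps :: "('n \<Rightarrow> nat) set \<Rightarrow> ('n \<Rightarrow> nat) set \<Rightarrow> ('n \<Rightarrow> nat) set" where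
  "gaps C S = C - S"

definition frob :: "(('n \<Rightarrow> nat) \<Rightarrow> ('n \<Rightarrow> nat) \<Rightarrow> bool) \<Rightarrow> ('n \<Rightarrow> nat) set \<Rightarrow> ('n \<Rightarrow> nat) set \<Rightarrow> ('n \<Rightarrow> nat)" where
  "frob ord C S = (THE f. f \<in> gaps C S \<and> (\<forall>y\<in>gaps C S. ord y f))"

definition PF :: "('n \<Rightarrow> nat) set \<Rightarrow> ('n \<Rightarrow> nat) set \<Rightarrow> ('n \<Rightarrow> nat) set" where
  "PF C S = {x \<in> gaps C S. \<forall>s \<in> S - {0}. x + s \<in> S}"

text \<open>F(S)/2 is an element h of N^p with h + h = F(S).\<close>
definition C_irreducible :: "(('n \<Rightarrow> nat) \<Rightarrow> ('n \<Rightarrow> nat) \<Rightarrow> bool) \<Rightarrow> ('n \<Rightarrow> nat) set \<Rightarrow> ('n \<Rightarrow> nat) set \<Rightarrow> bool" where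
  "C_irreducible ord C S \<longleftrightarrow>
     PF C S = {frob ord C S} \<or>
     (\<exists>h. h + h = frob ord C S \<and> PF C S = {frob ord C S, h})"

text \<open>x \<le>_S y iff y - x \<in> S (in N^p: y = x + s for some s \<in> S).\<close>
definition leS :: "('n \<Rightarrow> nat) set \<Rightarrow> ('n \<Rightarrow> nat) \<Rightarrow> ('n \<Rightarrow> nat) \<Rightarrow> bool" where
  "leS S x y \<longleftrightarrow> (\<exists>s\<in>S. y = x + s)"

definition FG :: "('n \<Rightarrow> nat) set \<Rightarrow> ('n \<Rightarrow> nat) set \<Rightarrow> ('n \<Rightarrow> nat) set" where
  "FG C S = {x \<in> gaps C S. x + x \<in> S \<and> x + x + x \<in> S}"

definition maxS :: "('n \<Rightarrow> nat) set \<Rightarrow> ('n \<Rightarrow> nat) set \<Rightarrow> ('n \<Rightarrow> nat) set" where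
  "maxS S A = {x \<in> A. \<forall>y\<in>A. leS S x y \<longrightarrow> y = x}"

end

theory Submission
  imports Defs
begin

text \<open>
  Every maximal element of FG(S) is a pseudo-Frobenius number, and so is F(S), which also lies
  in FG(S); hence F(S) is always maximal, and irreducibility forces it to be the only maximal
  element (a pseudo-Frobenius number x with 2x \<in> S cannot be F(S)/2).
  Conversely, suppose F(S) is the only maximal element. Every gap g has a multiple m g in FG(S)
  (take m largest with m g a gap), so m g \<le>_S F(S). For a pseudo-Frobenius number x \<noteq> F(S)
  this forces F(S) = m x, and comparing with the same relation for the gap (m - 1) x
  leaves only m = 2.
\<close>

lemma integer_cone_add_closed:
  assumes "integer_cone C" "x \<in> C" "y \<in> C"
  shows "x + y \<in> C"
proof -
  obtain G :: "('a \<Rightarrow> rat) set" where C: "C = {x. \<exists>l :: ('a \<Rightarrow> rat) \<Rightarrow> rat. (\<forall>g\<in>G. l g \<ge> 0) \<and>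
      (\<forall>i. of_nat (x i) = (\<Sum>g\<in>G. l g * g i))}"
    using assms(1) unfolding integer_cone_def by blast
  obtain l1 where l1: "\<forall>g\<in>G. l1 g \<ge> 0" "\<forall>i. of_nat (x i) = (\<Sum>g\<in>G. l1 g * g i)"
    using assms(2) C by blast
  obtain l2 where l2: "\<forall>g\<in>G. l2 g \<ge> 0" "\<forall>i. of_nat (y i) = (\<Sum>g\<in>G. l2 g * g i)"
    using assms(3) C by blast
  have "\<forall>i. of_nat ((x + y) i) = (\<Sum>g\<in>G. (l1 g + l2 g) * g i)"
    using l1 l2 by (simp add: sum.distrib distrib_right)
  moreover have "\<forall>g\<in>G. l1 g + l2 g \<ge> 0" using l1 l2 by simp
  ultimately show ?thesis unfolding C mem_Collect_eq by (intro exI[of _ "\<lambda>g. l1 g + l2 g"]) simp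
qed

lemma monomial_order_refl: "monomial_order ord \<Longrightarrow> ord a a"
  unfolding monomial_order_def by blast

lemma monomial_order_antisym: "monomial_order ord \<Longrightarrow> ord a b \<Longrightarrow> ord b a \<Longrightarrow> a = b"
  unfolding monomial_order_def by blast

lemma monomial_order_linear: "monomial_order ord \<Longrightarrow> ord a b \<or> ord b a"
  unfolding monomial_order_def by blast

lemma monomial_order_trans: "monomial_order ord \<Longrightarrow> ord a b \<Longrightarrow> ord b c \<Longrightarrow> ord a c"
  unfolding monomial_order_def by blast

lemma monomial_order_le_add: "monomial_order ord \<Longrightarrow> ord a (a + b)"
  unfolding monomial_order_def by (metis add.commute add_0)

lemma monomial_order_finite_greatest:
  assumes "monomial_order ord" "finite A" "A \<noteq> {}"
  shows "\<exists>f\<in>A. \<forall>y\<in>A. ord y f"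
  using assms(2,3)
proof (induction A rule: finite_ne_induct)
  case (singleton x)
  then show ?case using monomial_order_refl[OF assms(1)] by blast
next
  case (insert x A)
  then obtain f where "f \<in> A" "\<forall>y\<in>A. ord y f" by blast
  then show ?case
    using monomial_order_linear[OF assms(1), of x f] monomial_order_trans[OF assms(1)]
      monomial_order_refl[OF assms(1), of x] by blast
qed

lemma frob_eqI:
  assumes "monomial_order ord" "f \<in> gaps C S" "\<And>y. y \<in> gaps C S \<Longrightarrow> ord y f"
  shows "frob ord C S = f"
  unfolding frob_def
  using assms monomial_order_antisym[OF assms(1)] by (intro the_equality) auto

lemma nat_fun_add_eq_0_iff: "(x + y :: 'a \<Rightarrow> nat) = 0 \<longleftrightarrow> x = 0 \<and> y = 0"
  by (auto simp: fun_eq_iff)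

lemma nat_fun_double_inj: "(x + x :: 'a \<Rightarrow> nat) = y + y \<Longrightarrow> x = y"
  by (metis fun_eq_iff plus_fun_apply mult_2[symmetric] mult_cancel1 zero_neq_numeral)

text \<open>The constant function \<open>of_nat k\<close> turns \<open>of_nat k * x\<close> into the multiple k x.\<close>

lemma inj_multiples_nat_fun:
  assumes "(g :: 'a \<Rightarrow> nat) \<noteq> 0"
  shows "inj (\<lambda>k. of_nat k * g)"
proof
  fix a b assume "of_nat a * g = of_nat b * g"
  moreover obtain i where "g i \<noteq> 0" using assms by (auto simp: fun_eq_iff)
  ultimately show "a = b" by (metis mult_right_cancel of_nat_fun_apply of_nat_id times_fun_apply)
qed

lemma multiple_in_add_closed:
  assumes "\<And>x y. x \<in> C \<Longrightarrow> y \<in> C \<Longrightarrow> x + y \<in> C" "0 \<in> C" "x \<in> C"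
  shows "of_nat k * x \<in> C"
  by (induction k) (simp_all add: assms distrib_right)

lemma leS_trans:
  assumes "\<And>x y. x \<in> S \<Longrightarrow> y \<in> S \<Longrightarrow> x + y \<in> S" "leS S x y" "leS S y z"
  shows "leS S x z"
  using assms unfolding leS_def by (metis add.assoc)

text \<open>The pointwise order on N^p refines \<le>_S and has maximal elements in finite sets.\<close>

lemma exists_maxS_above:
  fixes A S :: "('a \<Rightarrow> nat) set"
  assumes "\<And>x y. x \<in> S \<Longrightarrow> y \<in> S \<Longrightarrow> x + y \<in> S" "0 \<in> S" "finite A" "x \<in> A"
  shows "\<exists>y\<in>maxS S A. leS S x y"
proof -
  define T where "T = {y \<in> A. leS S x y}"
  have "x \<in> T" using assms(2,4) unfolding T_def leS_def by force
  then obtain y where y: "y \<in> T" and y_max: "\<And>z. z \<in> T \<Longrightarrow> y \<le> z \<Longrightarrow> y = z"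
    using finite_has_maximal[of T] assms(3) unfolding T_def by auto
  have "z = y" if "z \<in> A" "leS S y z" for z
  proof -
    have "z \<in> T" using that y leS_trans[OF assms(1)] unfolding T_def by blast
    moreover have "y \<le> z" using that(2) unfolding leS_def by (auto simp: le_fun_def)
    ultimately show ?thesis using y_max by blast
  qed
  with y show ?thesis unfolding maxS_def T_def by blast
qed

lemma PF_FG_subset_maxS: "PF C S \<inter> FG C S \<subseteq> maxS S (FG C S)"
  unfolding maxS_def leS_def PF_def FG_def gaps_def by auto

lemma maxS_FG_subset_PF:
  assumes "\<And>x y. x \<in> C \<Longrightarrow> y \<in> C \<Longrightarrow> x + y \<in> C" "C_semigroup C S"
  shows "maxS S (FG C S) \<subseteq> PF C S"
proof
  fix x assume x: "x \<in> maxS S (FG C S)"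
  have "x + s \<in> S" if s: "s \<in> S" "s \<noteq> 0" for s
  proof (rule ccontr)
    assume "x + s \<notin> S"
    moreover have "(x + s) + (x + s) = (x + x) + (s + s)"
      and "(x + s) + (x + s) + (x + s) = (x + x + x) + (s + s + s)"
      by (simp_all add: algebra_simps)
    ultimately have "x + s \<in> FG C S"
      using x s assms unfolding maxS_def FG_def gaps_def C_semigroup_def by auto
    moreover have "leS S x (x + s)" using s unfolding leS_def by blast
    ultimately have "x + s = x" using x unfolding maxS_def by blast
    then show False using s(2) by (metis add_cancel_right_right)
  qed
  with x show "x \<in> PF C S" unfolding maxS_def PF_def FG_def by blast
qed

lemma gap_multiple_in_FG:
  assumes "\<And>x y. x \<in> C \<Longrightarrow> y \<in> C \<Longrightarrow> x + y \<in> C" "C_semigroup C S" "g \<in> gaps C S"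
  shows "\<exists>m\<ge>1. of_nat m * g \<in> FG C S"
proof -
  have S: "S \<subseteq> C" "0 \<in> S" "finite (gaps C S)" using assms(2) unfolding C_semigroup_def gaps_def by auto
  have gC: "g \<in> C" and "g \<noteq> 0" using assms(3) S(2) unfolding gaps_def by auto
  define K where "K = {k. 1 \<le> k \<and> of_nat k * g \<in> gaps C S}"
  have "finite K"
    by (rule finite_imageD[OF finite_subset[OF _ S(3)]])
       (auto simp: K_def inj_on_subset[OF inj_multiples_nat_fun[OF \<open>g \<noteq> 0\<close>]])
  moreover have "1 \<in> K" using assms(3) unfolding K_def by simp
  ultimately have m: "Max K \<in> K" using Max_in by blast
  have above: "k \<notin> K" if "Max K < k" for k
    using Max_ge[OF \<open>finite K\<close>, of k] that by linarith
  define m where "m = Max K"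
  have beyond: "of_nat k * g \<in> S" if "m < k" for k
    using above[of k] that multiple_in_add_closed[OF assms(1) _ gC, of k] S m
    unfolding m_def K_def gaps_def by auto
  have "m \<ge> 1" "of_nat m * g \<in> gaps C S" using m unfolding m_def K_def by auto
  moreover have "of_nat m * g + of_nat m * g \<in> S" "of_nat m * g + of_nat m * g + of_nat m * g \<in> S"
    using beyond[of "m + m"] beyond[of "m + m + m"] \<open>m \<ge> 1\<close> by (simp_all add: distrib_right)
  ultimately show ?thesis unfolding FG_def by blast
qed

lemma PF_multiple_add:
  assumes "x \<in> PF C S" "s \<in> S" "s \<noteq> 0"
  shows "of_nat (Suc k) * x + s \<in> S"
proof (induction k)
  case 0
  have "of_nat (Suc 0) * x = x" by simp
  with assms show ?case unfolding PF_def by (simp only:) blast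
next
  case (Suc k)
  moreover have "of_nat (Suc k) * x + s \<noteq> 0" using assms(3) by (simp add: nat_fun_add_eq_0_iff)
  ultimately have "x + (of_nat (Suc k) * x + s) \<in> S" using assms(1) unfolding PF_def by blast
  moreover have "of_nat (Suc (Suc k)) * x + s = x + (of_nat (Suc k) * x + s)"
    by (simp add: distrib_right add.assoc)
  ultimately show ?case by (simp only:)
qed

locale proper_C_semigroup =
  fixes C S :: "('n \<Rightarrow> nat) set"
    and ord :: "('n \<Rightarrow> nat) \<Rightarrow> ('n \<Rightarrow> nat) \<Rightarrow> bool"
  assumes add_closed: "\<And>x y. x \<in> C \<Longrightarrow> y \<in> C \<Longrightarrow> x + y \<in> C"
    and monomial_order: "monomial_order ord"
    and C_semigroup: "C_semigroup C S"
    and proper: "S \<noteq> C"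
begin

abbreviation F where "F \<equiv> frob ord C S"

lemma S_subset_C: "S \<subseteq> C" and zero_in_S: "0 \<in> S"
  and add_in_S: "x \<in> S \<Longrightarrow> y \<in> S \<Longrightarrow> x + y \<in> S" and finite_gaps: "finite (gaps C S)"
  using C_semigroup unfolding C_semigroup_def gaps_def by auto

lemma gap_in_C: "x \<in> gaps C S \<Longrightarrow> x \<in> C" and gap_nonzero: "x \<in> gaps C S \<Longrightarrow> x \<noteq> 0"
  using zero_in_S unfolding gaps_def by auto

lemma frob_gap_greatest: "F \<in> gaps C S" "\<And>y. y \<in> gaps C S \<Longrightarrow> ord y F"
proof -
  have "gaps C S \<noteq> {}" using S_subset_C proper unfolding gaps_def by blast
  with finite_gaps obtain f where f: "f \<in> gaps C S" "\<forall>y\<in>gaps C S. ord y f"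
    using monomial_order_finite_greatest[OF monomial_order] by blast
  moreover have "F = f" using frob_eqI[OF monomial_order] f by blast
  ultimately show "F \<in> gaps C S" "\<And>y. y \<in> gaps C S \<Longrightarrow> ord y F" by auto
qed

lemma frob_not_in_S: "F \<notin> S"
  using frob_gap_greatest(1) unfolding gaps_def by simp

lemma frob_add_in_S:
  assumes "y \<in> C" "y \<noteq> 0"
  shows "F + y \<in> S"
proof (rule ccontr)
  assume "F + y \<notin> S"
  then have "F + y \<in> gaps C S"
    using frob_gap_greatest(1) assms add_closed unfolding gaps_def by auto
  then have "ord (F + y) F" by (rule frob_gap_greatest(2))
  moreover have "ord F (F + y)" by (rule monomial_order_le_add[OF monomial_order])
  ultimately have "F + y = F" by (rule monomial_order_antisym[OF monomial_order])
  with assms(2) show False by (metis add_cancel_right_right)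
qed

lemma frob_PF: "F \<in> PF C S"
  using frob_gap_greatest(1) frob_add_in_S S_subset_C unfolding PF_def by blast

lemma frob_FG: "F \<in> FG C S"
proof -
  have FC: "F \<in> C" and "F \<noteq> 0"
    using gap_in_C gap_nonzero frob_gap_greatest(1) by blast+
  then have "F + F \<in> S" "F + F \<in> C" "F + F \<noteq> 0"
    using frob_add_in_S add_closed by (simp_all add: nat_fun_add_eq_0_iff)
  then have "F + F \<in> S" "F + (F + F) \<in> S" using frob_add_in_S by blast+
  then show ?thesis using frob_gap_greatest(1) unfolding FG_def by (simp add: add.assoc)
qed

lemma frob_maxS: "F \<in> maxS S (FG C S)"
  using PF_FG_subset_maxS frob_PF frob_FG by blast

lemma frob_above_multiple_of_gap:
  assumes "maxS S (FG C S) = {F}" "g \<in> gaps C S"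
  shows "\<exists>m\<ge>1. leS S (of_nat m * g) F"
proof -
  obtain m where "m \<ge> 1" "of_nat m * g \<in> FG C S"
    using gap_multiple_in_FG[OF add_closed C_semigroup assms(2)] by blast
  moreover have "finite (FG C S)"
    using finite_gaps by (rule rev_finite_subset) (auto simp: FG_def)
  ultimately obtain y where "y \<in> maxS S (FG C S)" "leS S (of_nat m * g) y"
    using exists_maxS_above[of S, OF add_in_S zero_in_S] by blast
  with assms(1) have "leS S (of_nat m * g) F" by simp
  with \<open>m \<ge> 1\<close> show ?thesis by blast
qed

lemma frob_eq_multiple_of_PF:
  assumes "maxS S (FG C S) = {F}" "x \<in> PF C S"
  obtains m where "m \<ge> 1" "F = of_nat m * x"
proof -
  obtain m s where m: "m \<ge> 1" "s \<in> S" "F = of_nat m * x + s"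
    using frob_above_multiple_of_gap[OF assms(1)] assms(2) unfolding PF_def leS_def by blast
  have "s = 0"
  proof (rule ccontr)
    assume "s \<noteq> 0"
    then have "of_nat (Suc (m - 1)) * x + s \<in> S" by (rule PF_multiple_add[OF assms(2) m(2)])
    with m(1,3) frob_not_in_S show False by simp
  qed
  with m show thesis by (intro that) simp_all
qed

lemma frob_not_higher_multiple_of_PF:
  assumes max: "maxS S (FG C S) = {F}" and x: "x \<in> PF C S"
    and n: "n \<ge> 1" and F_eq: "F = of_nat (Suc (Suc n)) * x"
  shows False
proof -
  have x_gap: "x \<in> gaps C S" using x unfolding PF_def by simp
  then have xC: "x \<in> C" and "x \<noteq> 0" by (rule gap_in_C, rule gap_nonzero)
  then obtain i where xi: "x i \<noteq> 0" by (auto simp: fun_eq_iff)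
  define g where "g = of_nat (Suc n) * x"
  have F_x_g: "F = x + g" unfolding F_eq g_def by (simp add: distrib_right)
  have "g \<noteq> 0" using xi unfolding g_def by (auto simp: fun_eq_iff)
  then have "g \<notin> S" using x frob_not_in_S unfolding F_x_g PF_def by blast
  moreover have "g \<in> C"
    unfolding g_def using S_subset_C zero_in_S by (intro multiple_in_add_closed[OF add_closed _ xC]) auto
  ultimately have "g \<in> gaps C S" unfolding gaps_def by simp
  then obtain k t where k: "k \<ge> 1" and t: "t \<in> S" and F_k_g: "F = of_nat k * g + t"
    using frob_above_multiple_of_gap[OF max] unfolding leS_def by blast
  have "k * (Suc n * x i) \<le> Suc (Suc n) * x i"
    using fun_cong[OF F_k_g, of i] unfolding F_eq g_def
    by (simp only: times_fun_apply plus_fun_apply of_nat_fun_apply of_nat_id)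
  then have "k * Suc n \<le> Suc (Suc n)" using xi by (simp only: mult.assoc[symmetric] mult_le_cancel2)
  moreover have "2 * Suc n > Suc (Suc n)" using n by simp
  ultimately have "k < 2" by (meson le_trans mult_le_mono1 not_less)
  with k have "k = 1" by simp
  with F_k_g F_x_g have "g + x = g + t" by (simp add: add.commute)
  then have "t = x" by (rule add_left_imp_eq[symmetric])
  with t x_gap show False unfolding gaps_def by simp
qed

lemma PF_double_eq_frob:
  assumes max: "maxS S (FG C S) = {F}" and x: "x \<in> PF C S" "x \<noteq> F"
  shows "x + x = F"
proof -
  obtain m where m: "m \<ge> 1" and Fm: "F = of_nat m * x"
    using frob_eq_multiple_of_PF[OF max x(1)] by blast
  consider "m = 1" | "m = 2" | "m \<ge> 3" using m by linarith
  then show ?thesis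
  proof cases
    case 1
    then have "F = x" using Fm by simp
    with x(2) show ?thesis by blast
  next
    case 2
    with Fm show ?thesis by (simp add: mult_2)
  next
    case 3
    then have "m = Suc (Suc (m - 2))" "m - 2 \<ge> 1" by simp_all
    with frob_not_higher_multiple_of_PF[OF max x(1)] Fm show ?thesis by metis
  qed
qed

lemma irreducible_iff_unique_maxS:
  "C_irreducible ord C S \<longleftrightarrow> maxS S (FG C S) = {F}"
proof
  assume irr: "C_irreducible ord C S"
  have "x = F" if x: "x \<in> maxS S (FG C S)" for x
  proof (rule ccontr)
    assume "x \<noteq> F"
    moreover have "x \<in> PF C S" using x maxS_FG_subset_PF[OF add_closed C_semigroup] by blast
    ultimately obtain h where "h + h = F" "x = h"
      using irr unfolding C_irreducible_def by blast
    moreover have "x + x \<in> S" using x unfolding maxS_def FG_def by blast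
    ultimately show False using frob_not_in_S by simp
  qed
  with frob_maxS show "maxS S (FG C S) = {F}" by blast
next
  assume max: "maxS S (FG C S) = {F}"
  show "C_irreducible ord C S"
  proof (cases "PF C S = {F}")
    case False
    then obtain h where h: "h \<in> PF C S" "h \<noteq> F" using frob_PF by blast
    have "y = h" if "y \<in> PF C S" "y \<noteq> F" for y
    proof (rule nat_fun_double_inj)
      show "y + y = h + h" using PF_double_eq_frob[OF max that] PF_double_eq_frob[OF max h] by simp
    qed
    with h(1) frob_PF have "PF C S = {F, h}" by blast
    moreover have "h + h = F" by (rule PF_double_eq_frob[OF max h])
    ultimately show ?thesis unfolding C_irreducible_def by blast
  qed (simp add: C_irreducible_def)
qed

end

theorem mainTheorem17:
  fixes C S :: "('n::finite \<Rightarrow> nat) set"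
    and ord :: "('n \<Rightarrow> nat) \<Rightarrow> ('n \<Rightarrow> nat) \<Rightarrow> bool"
  assumes "integer_cone C"
    and "monomial_order ord"
    and "C_semigroup C S"
    and "S \<noteq> C"
  shows "C_irreducible ord C S \<longleftrightarrow> card (maxS S (FG C S)) = 1"
proof -
  interpret proper_C_semigroup C S ord
  proof
    show "\<And>x y. x \<in> C \<Longrightarrow> y \<in> C \<Longrightarrow> x + y \<in> C"
      by (rule integer_cone_add_closed[OF assms(1)])
  qed (fact assms)+
  have "card (maxS S (FG C S)) = 1 \<longleftrightarrow> maxS S (FG C S) = {F}"
    using frob_maxS by (metis card_1_singletonE is_singletonI singletonD is_singleton_altdef)
  with irreducible_iff_unique_maxS show ?thesis by (simp only:)
qed

end
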